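(* Let $R=R_1\times R_2$ be a direct product of two finite commutative local rings with identity, and let $I=I_1\times I_2$ where $I_1$ is a proper ideal of $R_1$ and $I_2$ is a proper ideal of $R_2$. If the vertex set of $\Gamma''_{I_1}(R_1)$ or the vertex set of $\Gamma''_{I_2}(R_2)$ has more than one element, then $\Gamma''_I(R)$ is not planar.
   Context: The product has componentwise operations. For a commutative ring $S$ and an ideal $J$ of $S$, $\Gamma''_J(S)$ is the simple undirected graph whose vertex set is $\{x\in S\setminus J : xS+J\neq S\}$, with distinct vertices $x,y$ adjacent if and only if $x\notin yS+J$ and $y\notin xS+J$. A graph is planar if it can be drawn in the plane with edges meeting only at their endpoints. *)

theory Defs
  imports "HOL-Analysis.Analysis"
begin

instantiation prod :: (times, times) times
begin
definition times_prod_def: "x * y = (fst x * fst y, snd x * snd y)"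
instance ..
end

instantiation prod :: (one, one) one
begin
definition one_prod_def: "1 = (1, 1)"
instance ..
end

instance prod :: (comm_ring_1, comm_ring_1) comm_ring_1
  by standard (auto simp: times_prod_def one_prod_def zero_prod_def plus_prod_def
      minus_prod_def uminus_prod_def algebra_simps prod_eq_iff)

section \<open>Ideals and local rings (type-class idiom, the ring is the whole type)\<close>

definition is_ideal :: "'a::comm_ring_1 set \<Rightarrow> bool" where
  "is_ideal I \<longleftrightarrow> 0 \<in> I \<and> (\<forall>x\<in>I. \<forall>y\<in>I. x + y \<in> I) \<and> (\<forall>x\<in>I. \<forall>r. r * x \<in> I)"

definition maximal_ideal :: "'a::comm_ring_1 set \<Rightarrow> bool" where
  "maximal_ideal M \<longleftrightarrow> is_ideal M \<and> M \<noteq> UNIV \<and>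
     (\<forall>J. is_ideal J \<and> M \<subseteq> J \<longrightarrow> J = M \<or> J = UNIV)"

definition local_ring :: "'a::comm_ring_1 itself \<Rightarrow> bool" where
  "local_ring _ \<longleftrightarrow> (\<exists>!M::'a set. maximal_ideal M)"

definition coset_ideal :: "'a::comm_ring_1 \<Rightarrow> 'a set \<Rightarrow> 'a set" where
  "coset_ideal x J = {x * s + j | s j. j \<in> J}"

definition gamma_verts :: "'a::comm_ring_1 set \<Rightarrow> 'a set" where
  "gamma_verts J = {x. x \<notin> J \<and> coset_ideal x J \<noteq> UNIV}"

definition gamma_adj :: "'a::comm_ring_1 set \<Rightarrow> 'a \<Rightarrow> 'a \<Rightarrow> bool" where
  "gamma_adj J x y \<longleftrightarrow> x \<in> gamma_verts J \<and> y \<in> gamma_verts J \<and> x \<noteq> y \<and>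
     x \<notin> coset_ideal y J \<and> y \<notin> coset_ideal x J"

text \<open>A (simple undirected) graph with vertex set V and symmetric adjacency E is planar if it
  can be drawn in the plane: vertices go to distinct points, each edge {u,v} is drawn as an arc
  from u to v that passes through no other vertex, and the arcs of two different edges meet only
  in common endpoints. (The drawing is given for ordered pairs; both orientations of an edge must
  be valid drawings of it, which is no restriction since arcs may be reversed.)\<close>
definition planar :: "'v set \<Rightarrow> ('v \<Rightarrow> 'v \<Rightarrow> bool) \<Rightarrow> bool" where
  "planar V E \<longleftrightarrow> (\<exists>(pos :: 'v \<Rightarrow> real \<times> real) (\<gamma> :: 'v \<Rightarrow> 'v \<Rightarrow> real \<Rightarrow> real \<times> real).
     inj_on pos V \<and>
     (\<forall>u\<in>V. \<forall>v\<in>V. E u v \<longrightarrow>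
        arc (\<gamma> u v) \<and> pathstart (\<gamma> u v) = pos u \<and> pathfinish (\<gamma> u v) = pos v \<and>
        (\<forall>w\<in>V. w \<noteq> u \<and> w \<noteq> v \<longrightarrow> pos w \<notin> path_image (\<gamma> u v))) \<and>
     (\<forall>u\<in>V. \<forall>v\<in>V. \<forall>u'\<in>V. \<forall>v'\<in>V. E u v \<and> E u' v' \<and> {u, v} \<noteq> {u', v'} \<longrightarrow>
        path_image (\<gamma> u v) \<inter> path_image (\<gamma> u' v') \<subseteq> pos ` ({u, v} \<inter> {u', v'})))"

end

theory Submission
  imports Defs "HOL-Complex_Analysis.Winding_Numbers"
begin

text \<open>The graph contains \<open>K\<^sub>3\<^sub>,\<^sub>3\<close>. If \<open>a \<noteq> a'\<close> are vertices of
  \<open>\<Gamma>''\<^bsub>I\<^sub>1\<^esub>(R\<^sub>1)\<close>, then \<open>0, a, a'\<close> are non-units modulo \<open>I\<^sub>1\<close>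
  while \<open>1, 1 + a, 1 + a'\<close> are units modulo \<open>I\<^sub>1\<close> because \<open>R\<^sub>1\<close> is local; every
  vertex \<open>(u, 0)\<close> with \<open>u\<close> a unit is adjacent to every vertex \<open>(x, 1)\<close> with \<open>x\<close> a non-unit.

  \<open>K\<^sub>3\<^sub>,\<^sub>3\<close> is not planar by the Jordan curve theorem: the three paths
  \<open>A\<^sub>0 \<rightarrow> B\<^sub>j \<rightarrow> A\<^sub>1\<close> form a theta curve, one of whose arcs runs inside the loop
  formed by the other two, so its complement has three faces and the closure of each face misses
  the interior of one arc. But \<open>A\<^sub>2\<close> reaches all three \<open>B\<^sub>j\<close> without crossing the
  theta curve.\<close>

definition arc_interior :: "(real \<Rightarrow> 'a::topological_space) \<Rightarrow> 'a set" where
  "arc_interior g = path_image g - {pathstart g, pathfinish g}"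

lemma arc_interior_eq_image:
  assumes "arc g"
  shows "arc_interior g = g ` {0<..<1}"
proof -
  have "{0..1::real} = insert 0 (insert 1 {0<..<1})" by auto
  moreover have "g 0 \<notin> g ` {0<..<1}" "g 1 \<notin> g ` {0<..<1}"
    using assms by (force simp: arc_def inj_on_def)+
  ultimately show ?thesis
    by (auto simp: arc_interior_def path_image_def pathstart_def pathfinish_def)
qed

lemma continuous_on_arc_subset: "arc g \<Longrightarrow> S \<subseteq> {0..1} \<Longrightarrow> continuous_on S g"
  unfolding arc_def path_def using continuous_on_subset by blast

lemma connected_arc_interior: "arc g \<Longrightarrow> connected (arc_interior g)"
  by (auto simp: arc_interior_eq_image intro!: connected_continuous_image continuous_on_arc_subset)

lemma arc_interior_nonempty: "arc g \<Longrightarrow> arc_interior g \<noteq> {}"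
  by (simp add: arc_interior_eq_image)

lemma arc_interior_subset: "arc_interior g \<subseteq> path_image g"
  by (auto simp: arc_interior_def)

lemma arc_interior_Un_ends: "arc_interior g \<union> {pathstart g, pathfinish g} = path_image g"
  by (auto simp: arc_interior_def)

lemma arc_end_in_closure_component:
  assumes "arc g" and "path_image g \<inter> T \<subseteq> {pathfinish g}"
  shows "pathfinish g \<in> closure (connected_component_set (- T) (pathstart g))"
proof -
  let ?S = "g ` {0..<1}"
  have "g t \<noteq> g 1" if "t \<in> {0..<1}" for t
    using assms(1) that by (force simp: arc_def inj_on_def)
  then have "?S \<inter> T = {}"
    using assms(2) by (fastforce simp: path_image_def pathfinish_def)
  moreover have "connected ?S"
    using assms(1) by (auto intro!: connected_continuous_image continuous_on_arc_subset)
  moreover have "pathstart g \<in> ?S"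
    by (simp add: pathstart_def)
  ultimately have "?S \<subseteq> connected_component_set (- T) (pathstart g)"
    by (intro connected_component_maximal) auto
  moreover have "g ` closure {0..<1} \<subseteq> closure ?S"
    using assms(1) by (intro image_closure_subset) (auto simp: continuous_on_arc_subset closure_subset)
  then have "pathfinish g \<in> closure ?S"
    by (auto simp: pathfinish_def)
  ultimately show ?thesis
    using closure_mono by blast
qed

lemma connected_subset_of_open_separation:
  assumes "connected S" "open U" "open V" "U \<inter> V = {}" "S \<subseteq> U \<union> V" "x \<in> S" "x \<in> U"
  shows "S \<subseteq> U"
  using connectedD[OF assms(1-3)] assms(4-7) by blast

locale digon =
  fixes a b :: "real \<Rightarrow> complex" and p q :: complex
  assumes arcs: "arc a" "arc b"
    and ends: "pathstart a = p" "pathfinish a = q" "pathstart b = p" "pathfinish b = q"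
    and distinct_ends: "p \<noteq> q"
    and arcs_meet: "path_image a \<inter> path_image b = {p, q}"
begin

lemma simple_loop: "simple_path (a +++ reversepath b)"
  and closed_loop: "pathfinish (a +++ reversepath b) = pathstart (a +++ reversepath b)"
  and path_image_loop: "path_image (a +++ reversepath b) = path_image a \<union> path_image b"
  using arcs ends arcs_meet
  by (auto simp: simple_path_join_loop_eq arc_reversepath path_image_join)

lemma inside_nonempty: "inside (path_image a \<union> path_image b) \<noteq> {}"
  and open_inside: "open (inside (path_image a \<union> path_image b))"
  and connected_inside: "connected (inside (path_image a \<union> path_image b))"
  and open_outside: "open (outside (path_image a \<union> path_image b))"
  and inside_Un_outside:
    "inside (path_image a \<union> path_image b) \<union> outside (path_image a \<union> path_image b)
      = - (path_image a \<union> path_image b)"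
  and closure_inside:
    "closure (inside (path_image a \<union> path_image b))
      = inside (path_image a \<union> path_image b) \<union> (path_image a \<union> path_image b)"
  and closure_outside:
    "closure (outside (path_image a \<union> path_image b))
      = outside (path_image a \<union> path_image b) \<union> (path_image a \<union> path_image b)"
  using Jordan_inside_outside[OF simple_loop closed_loop]
  by (simp_all add: path_image_loop closure_Un_frontier)

lemma winding_number_loop:
  assumes "z \<notin> path_image a \<union> path_image b"
  shows "winding_number (a +++ reversepath b) z = winding_number a z - winding_number b z"
  using arcs ends assms by (simp add: winding_number_join arc_imp_path winding_number_reversepath)

lemma norm_winding_number_diff_inside:
  assumes "z \<in> inside (path_image a \<union> path_image b)"
  shows "norm (winding_number a z - winding_number b z) = 1"
  using simple_closed_path_norm_winding_number_inside[OF simple_loop] winding_number_loop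
    inside_no_overlap assms by (fastforce simp: path_image_loop)

lemma winding_number_eq_outside:
  assumes "z \<in> outside (path_image a \<union> path_image b)"
  shows "winding_number a z = winding_number b z"
  using winding_number_zero_in_outside[OF simple_path_imp_path[OF simple_loop] closed_loop]
    winding_number_loop outside_no_overlap assms by (fastforce simp: path_image_loop)

lemma connected_subset_inside_or_outside:
  assumes "connected A" "A \<inter> (path_image a \<union> path_image b) = {}"
  shows "A \<subseteq> inside (path_image a \<union> path_image b) \<or>
    A \<subseteq> outside (path_image a \<union> path_image b)"
  using connectedD[OF assms(1) open_inside open_outside] inside_Un_outside assms(2)
    inside_Int_outside by blast

lemma connected_subset_outside:
  assumes "connected A" "A \<inter> (path_image a \<union> path_image b) = {}"
    and "m \<in> closure A" "m \<in> outside (path_image a \<union> path_image b)"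
  shows "A \<subseteq> outside (path_image a \<union> path_image b)"
proof -
  have "\<not> A \<subseteq> inside (path_image a \<union> path_image b)"
  proof
    assume "A \<subseteq> inside (path_image a \<union> path_image b)"
    then have "m \<in> inside (path_image a \<union> path_image b) \<union> (path_image a \<union> path_image b)"
      using assms(3) closure_mono closure_inside by blast
    then show False
      using assms(4) inside_Int_outside outside_no_overlap by blast
  qed
  then show ?thesis
    using connected_subset_inside_or_outside assms(1,2) by blast
qed

end

lemma digon_commute: "digon a b p q \<Longrightarrow> digon b a p q"
  unfolding digon_def by (simp add: Int_commute conj_commute)

definition theta_curve ::
    "(real \<Rightarrow> complex) \<Rightarrow> (real \<Rightarrow> complex) \<Rightarrow> (real \<Rightarrow> complex) \<Rightarrow> complex \<Rightarrow> complex \<Rightarrow> bool"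
  where "theta_curve a b c p q \<longleftrightarrow> digon a b p q \<and> digon a c p q \<and> digon b c p q"

lemma theta_curve_rotate: "theta_curve a b c p q \<Longrightarrow> theta_curve b c a p q"
  and theta_curve_swap: "theta_curve a b c p q \<Longrightarrow> theta_curve a c b p q"
  unfolding theta_curve_def using digon_commute by blast+

lemma theta_curve_arc_interior_disjoint:
  assumes "theta_curve a b c p q"
  shows "arc_interior c \<inter> (path_image a \<union> path_image b) = {}"
proof -
  interpret ac: digon a c p q + bc: digon b c p q
    using assms by (auto simp: theta_curve_def)
  show ?thesis
    using ac.arcs_meet bc.arcs_meet by (auto simp: arc_interior_def ac.ends)
qed

lemma theta_curve_arc_interior_inside_or_outside:
  assumes "theta_curve a b c p q"
  shows "arc_interior c \<subseteq> inside (path_image a \<union> path_image b) \<or>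
    arc_interior c \<subseteq> outside (path_image a \<union> path_image b)"
proof -
  interpret ab: digon a b p q + ac: digon a c p q
    using assms by (auto simp: theta_curve_def)
  show ?thesis
    by (rule ab.connected_subset_inside_or_outside[OF connected_arc_interior[OF ac.arcs(2)]
          theta_curve_arc_interior_disjoint[OF assms]])
qed

theorem theta_curve_arc_inside:
  assumes theta: "theta_curve a b c p q"
  shows "arc_interior a \<subseteq> inside (path_image b \<union> path_image c) \<or>
    arc_interior b \<subseteq> inside (path_image a \<union> path_image c) \<or>
    arc_interior c \<subseteq> inside (path_image a \<union> path_image b)"
proof (rule ccontr)
  interpret ab: digon a b p q + ac: digon a c p q + bc: digon b c p q
    using theta by (auto simp: theta_curve_def)
  assume "\<not> ?thesis"
  then have out_a: "arc_interior a \<subseteq> outside (path_image b \<union> path_image c)"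
    and out_b: "arc_interior b \<subseteq> outside (path_image a \<union> path_image c)"
    and out_c: "arc_interior c \<subseteq> outside (path_image a \<union> path_image b)"
    using theta_curve_arc_interior_inside_or_outside[OF theta_curve_rotate[OF theta]]
      theta_curve_arc_interior_inside_or_outside[OF theta_curve_swap[OF theta]]
      theta_curve_arc_interior_inside_or_outside[OF theta]
    by blast+
  \<comment> \<open>Then the inside of the loop \<open>a \<union> b\<close> lies outside the other two loops, so the winding
    numbers of \<open>a\<close>, \<open>b\<close> and \<open>c\<close> around a point of it all agree.\<close>
  let ?I = "inside (path_image a \<union> path_image b)"
  have "p \<in> path_image a" "q \<in> path_image a"
    using ab.ends(1,2) by auto
  then have "?I \<inter> path_image c = {}"
    using out_c arc_interior_Un_ends[of c] ac.ends(3,4) inside_no_overlap inside_Int_outside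
    by blast
  then have disj: "?I \<inter> (path_image b \<union> path_image c) = {}"
    "?I \<inter> (path_image a \<union> path_image c) = {}"
    using inside_no_overlap by blast+
  obtain ma mb where m: "ma \<in> arc_interior a" "mb \<in> arc_interior b"
    using arc_interior_nonempty ab.arcs by blast
  then have "ma \<in> closure ?I" "mb \<in> closure ?I"
    using ab.closure_inside by (auto simp: arc_interior_def)
  then have "?I \<subseteq> outside (path_image b \<union> path_image c)"
    "?I \<subseteq> outside (path_image a \<union> path_image c)"
    using bc.connected_subset_outside[OF ab.connected_inside disj(1)]
      ac.connected_subset_outside[OF ab.connected_inside disj(2)] m out_a out_b by blast+
  moreover obtain x where "x \<in> ?I"
    using ab.inside_nonempty by blast
  ultimately show False
    using ab.norm_winding_number_diff_inside bc.winding_number_eq_outside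
      ac.winding_number_eq_outside by force
qed

text \<open>If \<open>c\<close> runs inside the loop \<open>a \<union> b\<close>, the complement of the theta curve has the three
  faces \<open>inside (a \<union> c)\<close>, \<open>inside (b \<union> c)\<close> and \<open>outside (a \<union> b)\<close>, and the closure of each
  of them misses the interior of one arc.\<close>

lemma theta_curve_component_misses_arc_interior_aux:
  assumes theta: "theta_curve a b c p q"
    and c_inside: "arc_interior c \<subseteq> inside (path_image a \<union> path_image b)"
    and x: "x \<notin> path_image a \<union> path_image b \<union> path_image c"
  defines "K \<equiv> connected_component_set (- (path_image a \<union> path_image b \<union> path_image c)) x"
  shows "arc_interior a \<inter> closure K = {} \<or> arc_interior b \<inter> closure K = {} \<or>
    arc_interior c \<inter> closure K = {}"
proof -
  interpret ab: digon a b p q + ac: digon a c p q + bc: digon b c p q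
    using theta by (auto simp: theta_curve_def)
  let ?F1 = "inside (path_image a \<union> path_image c)"
    and ?F2 = "inside (path_image b \<union> path_image c)"
    and ?F3 = "outside (path_image a \<union> path_image b)"
  have "path_image c \<inter> inside (path_image a \<union> path_image b) \<noteq> {}"
    using c_inside arc_interior_nonempty[OF ac.arcs(2)] arc_interior_subset by blast
  then obtain F12: "?F1 \<inter> ?F2 = {}"
    and split: "?F1 \<union> ?F2 \<union> (path_image c - {p, q}) = inside (path_image a \<union> path_image b)"
    by (rule split_inside_simple_closed_curve[OF arc_imp_simple_path[OF ab.arcs(1)] ab.ends(1,2)
          arc_imp_simple_path[OF ab.arcs(2)] ab.ends(3,4) arc_imp_simple_path[OF ac.arcs(2)]
          ac.ends(3,4) ab.distinct_ends ab.arcs_meet ac.arcs_meet bc.arcs_meet])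
  have F13: "?F1 \<inter> ?F3 = {}" and F23: "?F2 \<inter> ?F3 = {}"
    using split inside_Int_outside by blast+
  have cover: "K \<subseteq> ?F1 \<union> ?F2 \<union> ?F3"
    using ab.inside_Un_outside split connected_component_subset unfolding K_def by blast
  have "connected K" "x \<in> K"
    using x unfolding K_def by auto
  have "K \<subseteq> ?F1 \<or> K \<subseteq> ?F2 \<or> K \<subseteq> ?F3"
  proof -
    have "x \<in> ?F1 \<union> ?F2 \<union> ?F3"
      using cover \<open>x \<in> K\<close> by blast
    moreover have "K \<subseteq> ?F1" if "x \<in> ?F1"
      by (rule connected_subset_of_open_separation[OF \<open>connected K\<close> ac.open_inside
            open_Un[OF bc.open_inside ab.open_outside] _ _ \<open>x \<in> K\<close> that])
        (use cover F12 F13 in blast)+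
    moreover have "K \<subseteq> ?F2" if "x \<in> ?F2"
      by (rule connected_subset_of_open_separation[OF \<open>connected K\<close> bc.open_inside
            open_Un[OF ac.open_inside ab.open_outside] _ _ \<open>x \<in> K\<close> that])
        (use cover F12 F23 in blast)+
    moreover have "K \<subseteq> ?F3" if "x \<in> ?F3"
      by (rule connected_subset_of_open_separation[OF \<open>connected K\<close> ab.open_outside
            open_Un[OF ac.open_inside bc.open_inside] _ _ \<open>x \<in> K\<close> that])
        (use cover F13 F23 in blast)+
    ultimately show ?thesis
      by blast
  qed
  moreover have "arc_interior b \<inter> closure ?F1 = {}"
    using ac.closure_inside split inside_no_overlap[of "path_image a \<union> path_image b"]
      arc_interior_subset[of b] theta_curve_arc_interior_disjoint[OF theta_curve_swap[OF theta]]
    by blast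
  moreover have "arc_interior a \<inter> closure ?F2 = {}"
    using bc.closure_inside split inside_no_overlap[of "path_image a \<union> path_image b"]
      arc_interior_subset[of a] theta_curve_arc_interior_disjoint[OF theta_curve_rotate[OF theta]]
    by blast
  moreover have "arc_interior c \<inter> closure ?F3 = {}"
    using ab.closure_outside c_inside inside_no_overlap[of "path_image a \<union> path_image b"]
      inside_Int_outside[of "path_image a \<union> path_image b"]
    by blast
  ultimately show ?thesis
    using closure_mono by blast
qed

theorem theta_curve_component_misses_arc_interior:
  assumes theta: "theta_curve a b c p q"
    and x: "x \<notin> path_image a \<union> path_image b \<union> path_image c"
  defines "K \<equiv> connected_component_set (- (path_image a \<union> path_image b \<union> path_image c)) x"
  shows "arc_interior a \<inter> closure K = {} \<or> arc_interior b \<inter> closure K = {} \<or>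
    arc_interior c \<inter> closure K = {}"
proof -
  have bca: "path_image b \<union> path_image c \<union> path_image a = path_image a \<union> path_image b \<union> path_image c"
    and acb: "path_image a \<union> path_image c \<union> path_image b = path_image a \<union> path_image b \<union> path_image c"
    by blast+
  consider "arc_interior a \<subseteq> inside (path_image b \<union> path_image c)"
    | "arc_interior b \<subseteq> inside (path_image a \<union> path_image c)"
    | "arc_interior c \<subseteq> inside (path_image a \<union> path_image b)"
    using theta_curve_arc_inside[OF theta] by blast
  then show ?thesis
  proof cases
    case 1
    then show ?thesis
      using theta_curve_component_misses_arc_interior_aux[OF theta_curve_rotate[OF theta]] x
      unfolding K_def bca by blast
  next
    case 2
    then show ?thesis
      using theta_curve_component_misses_arc_interior_aux[OF theta_curve_swap[OF theta]] x
      unfolding K_def acb by blast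
  next
    case 3
    then show ?thesis
      using theta_curve_component_misses_arc_interior_aux[OF theta] x unfolding K_def by blast
  qed
qed

theorem no_complex_drawing_of_K33:
  fixes A B :: "nat \<Rightarrow> complex" and E :: "nat \<Rightarrow> nat \<Rightarrow> real \<Rightarrow> complex"
  assumes arc: "\<And>i j. i < 3 \<Longrightarrow> j < 3 \<Longrightarrow> arc (E i j)"
    and start: "\<And>i j. i < 3 \<Longrightarrow> j < 3 \<Longrightarrow> pathstart (E i j) = A i"
    and finish: "\<And>i j. i < 3 \<Longrightarrow> j < 3 \<Longrightarrow> pathfinish (E i j) = B j"
    and inj_A: "inj_on A {..<3}" and inj_B: "inj_on B {..<3}"
    and A_neq_B: "\<And>i j. i < 3 \<Longrightarrow> j < 3 \<Longrightarrow> A i \<noteq> B j"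
    and meet: "\<And>i j i' j'. i < 3 \<Longrightarrow> j < 3 \<Longrightarrow> i' < 3 \<Longrightarrow> j' < 3 \<Longrightarrow> (i, j) \<noteq> (i', j') \<Longrightarrow>
      path_image (E i j) \<inter> path_image (E i' j') \<subseteq> {A i, B j} \<inter> {A i', B j'}"
  shows False
proof -
  have A_neq: "A i \<noteq> A i'" "B i \<noteq> B i'" if "i < 3" "i' < 3" "i \<noteq> i'" for i i'
    using inj_A inj_B that by (auto dest: inj_onD)
  have start_in: "A i \<in> path_image (E i j)" if "i < 3" "j < 3" for i j
    using start[OF that] pathstart_in_path_image by metis
  define P where "P j = E 0 j +++ reversepath (E 1 j)" for j
  have image_P: "path_image (P j) = path_image (E 0 j) \<union> path_image (E 1 j)" if "j < 3" for j
    using that start finish by (simp add: P_def path_image_join)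
  have ends_P: "pathstart (P j) = A 0" "pathfinish (P j) = A 1" if "j < 3" for j
    using that start by (simp_all add: P_def)
  have digon_P: "digon (P j) (P k) (A 0) (A 1)" if "j < 3" "k < 3" "j \<noteq> k" for j k
  proof -
    have "arc (P l)" if "l < 3" for l
      unfolding P_def using that arc start finish meet[of 0 l 1 l] A_neq[of 0 1]
      by (intro arc_join) (auto simp: arc_reversepath)
    moreover have "path_image (P j) \<inter> path_image (P k) \<subseteq> {A 0, A 1}"
      using meet[of 0 j 0 k] meet[of 0 j 1 k] meet[of 1 j 0 k] meet[of 1 j 1 k] that
        A_neq[of j k] by (auto simp: image_P)
    moreover have "{A 0, A 1} \<subseteq> path_image (P j) \<inter> path_image (P k)"
      using that start_in by (auto simp: image_P)
    ultimately show ?thesis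
      unfolding digon_def using that ends_P A_neq[of 0 1] by auto
  qed
  then have theta: "theta_curve (P 0) (P 1) (P 2) (A 0) (A 1)"
    by (simp add: theta_curve_def)
  let ?\<Theta> = "path_image (P 0) \<union> path_image (P 1) \<union> path_image (P 2)"
  have third_arcs: "path_image (E 2 j) \<inter> ?\<Theta> \<subseteq> {B j}" if "j < 3" for j
  proof -
    have "path_image (E 2 j) \<inter> path_image (E i k) \<subseteq> {B j}" if "i < 2" "k < 3" for i k
      using meet[of 2 j i k] that \<open>j < 3\<close> A_neq[of 2 i] A_neq_B[of 2 k] by fastforce
    from this[of 0 0] this[of 0 1] this[of 0 2] this[of 1 0] this[of 1 1] this[of 1 2]
    show ?thesis
      by (auto simp: image_P)
  qed
  have outside_theta: "A 2 \<notin> ?\<Theta>"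
    using third_arcs[of 0] start_in[of 2 0] A_neq_B[of 2 0] by force
  have B_adherent: "B j \<in> arc_interior (P j) \<inter> closure (connected_component_set (- ?\<Theta>) (A 2))"
    if "j < 3" for j
  proof
    show "B j \<in> arc_interior (P j)"
      using that A_neq_B[of 0 j] A_neq_B[of 1 j] finish[of 0 j] pathfinish_in_path_image[of "E 0 j"]
      by (auto simp: arc_interior_def image_P ends_P)
    show "B j \<in> closure (connected_component_set (- ?\<Theta>) (A 2))"
      using arc_end_in_closure_component[OF arc, of 2 j ?\<Theta>] that third_arcs start finish by simp
  qed
  from B_adherent[of 0] B_adherent[of 1] B_adherent[of 2] show False
    using theta_curve_component_misses_arc_interior[OF theta outside_theta] by auto
qed

definition complex_of_pair :: "real \<times> real \<Rightarrow> complex" where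
  "complex_of_pair z = Complex (fst z) (snd z)"

lemma linear_complex_of_pair: "linear complex_of_pair"
  by (rule linearI) (auto simp: complex_of_pair_def complex_eq_iff)

lemma inj_complex_of_pair: "inj complex_of_pair"
  by (auto simp: inj_on_def complex_of_pair_def prod_eq_iff)

theorem not_planar_if_K33_subgraph:
  fixes V :: "'v set" and E :: "'v \<Rightarrow> 'v \<Rightarrow> bool" and va vb :: "nat \<Rightarrow> 'v"
  assumes in_V: "\<And>i. i < 3 \<Longrightarrow> va i \<in> V" "\<And>j. j < 3 \<Longrightarrow> vb j \<in> V"
    and inj: "inj_on va {..<3}" "inj_on vb {..<3}"
    and va_neq_vb: "\<And>i j. i < 3 \<Longrightarrow> j < 3 \<Longrightarrow> va i \<noteq> vb j"
    and edges: "\<And>i j. i < 3 \<Longrightarrow> j < 3 \<Longrightarrow> E (va i) (vb j)"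
  shows "\<not> planar V E"
proof
  assume "planar V E"
  then obtain pos :: "'v \<Rightarrow> real \<times> real" and \<gamma> :: "'v \<Rightarrow> 'v \<Rightarrow> real \<Rightarrow> real \<times> real"
    where inj_pos: "inj_on pos V"
      and arcs: "\<And>u v. u \<in> V \<Longrightarrow> v \<in> V \<Longrightarrow> E u v \<Longrightarrow>
        arc (\<gamma> u v) \<and> pathstart (\<gamma> u v) = pos u \<and> pathfinish (\<gamma> u v) = pos v"
      and meet: "\<And>u v u' v'. u \<in> V \<Longrightarrow> v \<in> V \<Longrightarrow> u' \<in> V \<Longrightarrow> v' \<in> V \<Longrightarrow>
        E u v \<Longrightarrow> E u' v' \<Longrightarrow> {u, v} \<noteq> {u', v'} \<Longrightarrow>
        path_image (\<gamma> u v) \<inter> path_image (\<gamma> u' v') \<subseteq> pos ` ({u, v} \<inter> {u', v'})"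
    using \<open>planar V E\<close> unfolding planar_def by metis
  let ?c = complex_of_pair
  have inj_c_pos: "inj_on (?c \<circ> pos) V"
    using inj_pos inj_complex_of_pair by (simp add: comp_inj_on inj_on_subset)
  have image_c: "path_image (?c \<circ> \<gamma> u v) = ?c ` path_image (\<gamma> u v)" for u v
    by (simp add: path_image_compose)
  show False
  proof (rule no_complex_drawing_of_K33[of "\<lambda>i j. ?c \<circ> \<gamma> (va i) (vb j)"
        "?c \<circ> pos \<circ> va" "?c \<circ> pos \<circ> vb"])
    fix i j :: nat
    assume ij: "i < 3" "j < 3"
    note arc_ij = arcs[OF in_V(1)[OF ij(1)] in_V(2)[OF ij(2)] edges[OF ij]]
    show "arc (?c \<circ> \<gamma> (va i) (vb j))"
      using arc_ij by (simp add: arc_linear_image_eq[OF linear_complex_of_pair inj_complex_of_pair])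
    show "pathstart (?c \<circ> \<gamma> (va i) (vb j)) = (?c \<circ> pos \<circ> va) i"
      "pathfinish (?c \<circ> \<gamma> (va i) (vb j)) = (?c \<circ> pos \<circ> vb) j"
      using arc_ij by (simp_all add: pathstart_compose pathfinish_compose)
    show "(?c \<circ> pos \<circ> va) i \<noteq> (?c \<circ> pos \<circ> vb) j"
      using inj_on_eq_iff[OF inj_c_pos] in_V ij va_neq_vb by simp
  next
    show "inj_on (?c \<circ> pos \<circ> va) {..<3}" "inj_on (?c \<circ> pos \<circ> vb) {..<3}"
      using inj in_V by (auto intro!: comp_inj_on inj_on_subset[OF inj_c_pos])
  next
    fix i j i' j' :: nat
    assume ij: "i < 3" "j < 3" "i' < 3" "j' < 3" "(i, j) \<noteq> (i', j')"
    have "{va i, vb j} \<noteq> {va i', vb j'}"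
      using ij inj va_neq_vb by (auto simp: doubleton_eq_iff dest: inj_onD)
    then have "path_image (\<gamma> (va i) (vb j)) \<inter> path_image (\<gamma> (va i') (vb j'))
        \<subseteq> pos ` ({va i, vb j} \<inter> {va i', vb j'})"
      using ij by (intro meet in_V edges)
    then show "path_image (?c \<circ> \<gamma> (va i) (vb j)) \<inter> path_image (?c \<circ> \<gamma> (va i') (vb j'))
        \<subseteq> {(?c \<circ> pos \<circ> va) i, (?c \<circ> pos \<circ> vb) j} \<inter>
          {(?c \<circ> pos \<circ> va) i', (?c \<circ> pos \<circ> vb) j'}"
      unfolding image_c image_Int[OF inj_complex_of_pair, symmetric] by auto
  qed
qed

lemma mem_coset_ideal_iff: "y \<in> coset_ideal x J \<longleftrightarrow> (\<exists>s j. y = x * s + j \<and> j \<in> J)"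
  by (auto simp: coset_ideal_def)

lemma ideal_eq_UNIV_if_one_mem: "is_ideal J \<Longrightarrow> 1 \<in> J \<Longrightarrow> J = UNIV"
  unfolding is_ideal_def by (metis UNIV_eq_I mult.right_neutral)

lemma is_ideal_coset_ideal:
  assumes I: "is_ideal I"
  shows "is_ideal (coset_ideal x I)"
proof -
  have "0 \<in> coset_ideal x I"
    using I by (auto simp: mem_coset_ideal_iff is_ideal_def intro!: exI[of _ 0])
  moreover have "y + z \<in> coset_ideal x I" if yz: "y \<in> coset_ideal x I" "z \<in> coset_ideal x I" for y z
  proof -
    obtain s j s' j' where "y = x * s + j" "j \<in> I" "z = x * s' + j'" "j' \<in> I"
      using yz unfolding mem_coset_ideal_iff by blast
    then show ?thesis
      using I unfolding mem_coset_ideal_iff is_ideal_def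
      by (intro exI[of _ "s + s'"] exI[of _ "j + j'"]) (auto simp: algebra_simps)
  qed
  moreover have "r * y \<in> coset_ideal x I" if y: "y \<in> coset_ideal x I" for y r
  proof -
    obtain s j where "y = x * s + j" "j \<in> I"
      using y by (auto simp: mem_coset_ideal_iff)
    then show ?thesis
      using I unfolding mem_coset_ideal_iff is_ideal_def
      by (intro exI[of _ "r * s"] exI[of _ "r * j"]) (auto simp: algebra_simps)
  qed
  ultimately show ?thesis
    unfolding is_ideal_def by blast
qed

lemma coset_ideal_self: "is_ideal I \<Longrightarrow> x \<in> coset_ideal x I"
  unfolding mem_coset_ideal_iff is_ideal_def by (intro exI[of _ 1] exI[of _ 0]) simp

lemma subset_coset_ideal: "I \<subseteq> coset_ideal x I"
proof
  fix y
  assume "y \<in> I"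
  then show "y \<in> coset_ideal x I"
    unfolding mem_coset_ideal_iff by (intro exI[of _ 0] exI[of _ y]) simp
qed

lemma coset_ideal_least:
  assumes J: "is_ideal J" and "x \<in> J" "I \<subseteq> J"
  shows "coset_ideal x I \<subseteq> J"
proof
  fix y
  assume "y \<in> coset_ideal x I"
  then obtain s j where "y = x * s + j" "j \<in> I"
    by (auto simp: mem_coset_ideal_iff)
  moreover have "x * s \<in> J"
    using J \<open>x \<in> J\<close> unfolding is_ideal_def by (metis mult.commute)
  ultimately show "y \<in> J"
    using J \<open>I \<subseteq> J\<close> by (auto simp: is_ideal_def)
qed

lemma coset_ideal_zero [simp]: "coset_ideal 0 I = I"
  by (auto simp: mem_coset_ideal_iff)

lemma coset_ideal_one: "is_ideal I \<Longrightarrow> coset_ideal 1 I = UNIV"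
  using ideal_eq_UNIV_if_one_mem[OF is_ideal_coset_ideal coset_ideal_self] by blast

lemma notin_ideal_if_coset_ideal_eq_UNIV:
  "is_ideal I \<Longrightarrow> I \<noteq> UNIV \<Longrightarrow> coset_ideal u I = UNIV \<Longrightarrow> u \<notin> I"
  using coset_ideal_least[of I u I] by blast

lemma coset_ideal_eq_UNIV_if_mem:
  assumes "is_ideal I" "coset_ideal u I = UNIV" "u \<in> coset_ideal x I"
  shows "coset_ideal x I = UNIV"
  using coset_ideal_least[OF is_ideal_coset_ideal[OF assms(1)] assms(3) subset_coset_ideal] assms(2)
  by blast

lemma maximal_ideal_exists:
  fixes J :: "'a::{finite, comm_ring_1} set"
  assumes "is_ideal J" "J \<noteq> UNIV"
  shows "\<exists>M. maximal_ideal M \<and> J \<subseteq> M"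
  using assms
proof (induction "card (UNIV - J)" arbitrary: J rule: less_induct)
  case less
  show ?case
  proof (cases "maximal_ideal J")
    case False
    then obtain K where K: "is_ideal K" "J \<subset> K" "K \<noteq> UNIV"
      using less.prems unfolding maximal_ideal_def by blast
    then have "card (UNIV - K) < card (UNIV - J)"
      by (intro psubset_card_mono) auto
    then show ?thesis
      using less.hyps K by (meson order.trans less_imp_le)
  qed blast
qed

lemma local_ring_coset_ideal_one_plus:
  fixes I :: "'a::{finite, comm_ring_1} set"
  assumes "local_ring TYPE('a)" "is_ideal I" "coset_ideal a I \<noteq> UNIV"
  shows "coset_ideal (1 + a) I = UNIV"
proof (rule ccontr)
  assume "coset_ideal (1 + a) I \<noteq> UNIV"
  then obtain M1 where M1: "maximal_ideal M1" "1 + a \<in> M1"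
    using maximal_ideal_exists[OF is_ideal_coset_ideal[OF assms(2)]] coset_ideal_self[OF assms(2)]
    by blast
  obtain M2 where M2: "maximal_ideal M2" "a \<in> M2"
    using maximal_ideal_exists[OF is_ideal_coset_ideal[OF assms(2)] assms(3)] coset_ideal_self[OF assms(2)]
    by blast
  \<comment> \<open>In a local ring \<open>a\<close> and \<open>1 + a\<close> cannot both lie in the unique maximal ideal.\<close>
  have "M1 = M2"
    using assms(1) M1(1) M2(1) unfolding local_ring_def by blast
  have M1_proper: "is_ideal M1" "M1 \<noteq> UNIV"
    using M1(1) by (auto simp: maximal_ideal_def)
  then have "(-1) * a \<in> M1"
    using M2(2) \<open>M1 = M2\<close> unfolding is_ideal_def by blast
  then have "(1 + a) + (-1) * a \<in> M1"
    using M1_proper(1) M1(2) unfolding is_ideal_def by blast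
  then have "1 \<in> M1"
    by simp
  then show False
    using M1_proper ideal_eq_UNIV_if_one_mem by blast
qed

lemma coset_ideal_Times: "coset_ideal (x, y) (I \<times> J) = coset_ideal x I \<times> coset_ideal y J"
proof (intro set_eqI iffI)
  fix z :: "'a \<times> 'b"
  assume "z \<in> coset_ideal (x, y) (I \<times> J)"
  then show "z \<in> coset_ideal x I \<times> coset_ideal y J"
    by (fastforce simp: mem_coset_ideal_iff times_prod_def)
next
  fix z :: "'a \<times> 'b"
  assume "z \<in> coset_ideal x I \<times> coset_ideal y J"
  then obtain s j s' j' where "fst z = x * s + j" "j \<in> I" "snd z = y * s' + j'" "j' \<in> J"
    by (auto simp: mem_coset_ideal_iff)
  then show "z \<in> coset_ideal (x, y) (I \<times> J)"
    unfolding mem_coset_ideal_iff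
    by (intro exI[of _ "(s, s')"] exI[of _ "(j, j')"]) (simp add: times_prod_def prod_eq_iff)
qed

lemma gamma_adj_Times_unit_nonunit:
  fixes I :: "'a::comm_ring_1 set" and J :: "'b::comm_ring_1 set"
  assumes I: "is_ideal I" and J: "is_ideal J" "J \<noteq> UNIV"
    and u: "coset_ideal u I = UNIV" and x: "coset_ideal x I \<noteq> UNIV"
  shows "gamma_adj (I \<times> J) (u, 0) (x, 1)" and "gamma_adj (J \<times> I) (0, u) (1, x)"
proof -
  have "u \<notin> I"
    using notin_ideal_if_coset_ideal_eq_UNIV[OF I _ u] x subset_coset_ideal by blast
  moreover have "u \<notin> coset_ideal x I"
    using coset_ideal_eq_UNIV_if_mem[OF I u] x by blast
  moreover have "(1::'b) \<notin> J" "(0::'b) \<in> J"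
    using ideal_eq_UNIV_if_one_mem J by (auto simp: is_ideal_def)
  moreover from this have "(0::'b) \<noteq> 1" "UNIV \<times> J \<noteq> UNIV" "J \<times> UNIV \<noteq> UNIV"
    by auto
  moreover have "coset_ideal x I \<times> UNIV \<noteq> UNIV" "UNIV \<times> coset_ideal x I \<noteq> UNIV"
    using x by auto
  ultimately show "gamma_adj (I \<times> J) (u, 0) (x, 1)" "gamma_adj (J \<times> I) (0, u) (1, x)"
    by (simp_all add: gamma_adj_def gamma_verts_def coset_ideal_Times coset_ideal_one[OF J(1)] u)
qed

lemma local_ring_three_units_three_nonunits:
  fixes I :: "'a::{finite, comm_ring_1} set"
  assumes "local_ring TYPE('a)" "is_ideal I" "I \<noteq> UNIV" "1 < card (gamma_verts I)"
  obtains u x :: "nat \<Rightarrow> 'a" where "inj_on u {..<3}" "inj_on x {..<3}"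
    "\<And>i. i < 3 \<Longrightarrow> coset_ideal (u i) I = UNIV" "\<And>i. i < 3 \<Longrightarrow> coset_ideal (x i) I \<noteq> UNIV"
proof -
  obtain a a' where a: "a \<in> gamma_verts I" "a' \<in> gamma_verts I" "a \<noteq> a'"
    using assms(4) card_le_Suc0_iff_eq[of "gamma_verts I"] by fastforce
  define x where "x = nth [0, a, a']"
  have "distinct [0, a, a']"
    using a assms(2) by (auto simp: gamma_verts_def is_ideal_def)
  then have inj_x: "inj_on x {..<3}"
    unfolding x_def by (intro inj_on_nth) auto
  have "x ` {..<3} = {0, a, a'}"
    by (auto simp: x_def lessThan_nat_numeral)
  then have nonunit: "coset_ideal (x i) I \<noteq> UNIV" if "i < 3" for i
  proof -
    have "x i \<in> {0, a, a'}"
      using that \<open>x ` {..<3} = {0, a, a'}\<close> by blast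
    then show ?thesis
      using a assms(3) by (auto simp: gamma_verts_def)
  qed
  show ?thesis
  proof
    show "inj_on (\<lambda>i. 1 + x i) {..<3}"
      using inj_x by (auto simp: inj_on_def)
    show "coset_ideal (1 + x i) I = UNIV" if "i < 3" for i
      using local_ring_coset_ideal_one_plus[OF assms(1,2) nonunit[OF that]] .
  qed (use inj_x nonunit in auto)
qed

theorem lemma3p8:
  fixes I1 :: "'a::{finite, comm_ring_1} set" and I2 :: "'b::{finite, comm_ring_1} set"
  assumes "local_ring TYPE('a)" and "local_ring TYPE('b)"
    and "is_ideal I1" and "I1 \<noteq> UNIV"
    and "is_ideal I2" and "I2 \<noteq> UNIV"
    and "card (gamma_verts I1) > 1 \<or> card (gamma_verts I2) > 1"
  shows "\<not> planar (gamma_verts (I1 \<times> I2)) (gamma_adj (I1 \<times> I2))"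
  using assms(7)
proof
  assume "card (gamma_verts I1) > 1"
  then obtain u x :: "nat \<Rightarrow> 'a" where inj: "inj_on u {..<3}" "inj_on x {..<3}"
    and units: "\<And>i. i < 3 \<Longrightarrow> coset_ideal (u i) I1 = UNIV"
    and nonunits: "\<And>i. i < 3 \<Longrightarrow> coset_ideal (x i) I1 \<noteq> UNIV"
    using local_ring_three_units_three_nonunits[OF assms(1,3,4)] by blast
  have "gamma_adj (I1 \<times> I2) (u i, 0) (x j, 1)" if "i < 3" "j < 3" for i j
    using gamma_adj_Times_unit_nonunit(1)[OF assms(3,5,6) units nonunits] that .
  then show ?thesis
    by (intro not_planar_if_K33_subgraph[where va = "\<lambda>i. (u i, 0)" and vb = "\<lambda>j. (x j, 1)"])
      (use inj in \<open>auto simp: gamma_adj_def inj_on_def\<close>)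
next
  assume "card (gamma_verts I2) > 1"
  then obtain u x :: "nat \<Rightarrow> 'b" where inj: "inj_on u {..<3}" "inj_on x {..<3}"
    and units: "\<And>i. i < 3 \<Longrightarrow> coset_ideal (u i) I2 = UNIV"
    and nonunits: "\<And>i. i < 3 \<Longrightarrow> coset_ideal (x i) I2 \<noteq> UNIV"
    using local_ring_three_units_three_nonunits[OF assms(2,5,6)] by blast
  have "gamma_adj (I1 \<times> I2) (0, u i) (1, x j)" if "i < 3" "j < 3" for i j
    using gamma_adj_Times_unit_nonunit(2)[OF assms(5,3,4) units nonunits] that .
  then show ?thesis
    by (intro not_planar_if_K33_subgraph[where va = "\<lambda>i. (0, u i)" and vb = "\<lambda>j. (1, x j)"])
      (use inj in \<open>auto simp: gamma_adj_def inj_on_def\<close>)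
qed

end
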